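(* Let $f:\mathbb{R}^d\to\mathbb{R}$ be convex and differentiable, and suppose that $\nabla^2f(\boldsymbol x)\preceq L\boldsymbol I$ for all $\boldsymbol x\in B(\boldsymbol x_0,M)$, for some $\boldsymbol x_0\in\mathbb{R}^d$, $0<M\le+\infty$ and $0<L<+\infty$. If $\lambda>\|\nabla f(\boldsymbol x_0)\|_2$, then for all $\boldsymbol x\in B\big(\boldsymbol x_0,\min\{(\lambda-\|\nabla f(\boldsymbol x_0)\|_2)/L,M\}\big)$, $$f(\boldsymbol x)=\inf_{\boldsymbol y\in\mathbb{R}^d}\{f(\boldsymbol y)+\lambda\|\boldsymbol x-\boldsymbol y\|_2\}\qquad\text{and}\qquad\mathop{\mathrm{argmin}}_{\boldsymbol y\in\mathbb{R}^d}\{f(\boldsymbol y)+\lambda\|\boldsymbol x-\boldsymbol y\|_2\}=\{\boldsymbol x\}.$$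
   Context: $B(\boldsymbol x,r)$ is the closed Euclidean ball; $f$ is assumed twice differentiable on $B(\boldsymbol x_0,M)$ so that the Hessian bound makes sense. *)

theory Defs
  imports "HOL-Analysis.Analysis"
begin

end

theory Submission
  imports Defs
begin

text \<open>
  If \<open>norm (g x) \<le> lam\<close>, the tangent inequality of the convex function \<open>f\<close> gives
  \<open>f y \<ge> f x - lam * norm (y - x)\<close>, so \<open>x\<close> minimises \<open>f y + lam * norm (x - y)\<close>.
  On the ball the Hessian \<open>H\<close> is symmetric (it is the derivative of a gradient) and positive
  semidefinite (by convexity), so \<open>H \<preceq> L\<close> yields \<open>norm (H v)\<^sup>2 \<le> L * (H v \<bullet> v)\<close>, and the mean
  value theorem along the radius gives \<open>norm (g x - g x0) \<le> L * dist x0 x\<close>; hence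
  \<open>norm (g x) \<le> lam\<close> on the smaller ball.

  A second minimiser \<open>y\<close> makes \<open>f\<close> decrease with slope \<open>lam\<close> along \<open>[x, y]\<close>, forcing
  \<open>norm (g p) \<ge> lam\<close> for all \<open>p \<in> [x, y)\<close>. At \<open>p = x\<close> this means equality throughout the
  Lipschitz estimate; by the equality case of the mean value argument \<open>g x\<close> then points away
  from \<open>x0\<close>, while \<open>y - x\<close> is a negative multiple of \<open>g x\<close>. So \<open>[x, y)\<close> enters the open
  smaller ball, where \<open>norm (g p) < lam\<close>: a contradiction.
\<close>

lemma convex_on_along_line:
  assumes "convex_on UNIV f"
  shows "convex_on UNIV (\<lambda>t. f (a + t *\<^sub>R u))"
proof (rule convex_onI)
  fix \<mu> s t :: real assume "0 < \<mu>" "\<mu> < 1"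
  have "a + ((1 - \<mu>) *\<^sub>R s + \<mu> *\<^sub>R t) *\<^sub>R u = (1 - \<mu>) *\<^sub>R (a + s *\<^sub>R u) + \<mu> *\<^sub>R (a + t *\<^sub>R u)"
    by (simp add: algebra_simps)
  then show "f (a + ((1 - \<mu>) *\<^sub>R s + \<mu> *\<^sub>R t) *\<^sub>R u) \<le> (1 - \<mu>) * f (a + s *\<^sub>R u) + \<mu> * f (a + t *\<^sub>R u)"
    using convex_onD[OF assms, of \<mu>] \<open>0 < \<mu>\<close> \<open>\<mu> < 1\<close> by simp
qed simp

lemma has_derivative_along_line:
  assumes "(F has_derivative F') (at (a + t *\<^sub>R u))"
  shows "((\<lambda>s. F (a + s *\<^sub>R u)) has_derivative (\<lambda>h. F' (h *\<^sub>R u))) (at t)"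
proof -
  have "((\<lambda>s. a + s *\<^sub>R u) has_derivative (\<lambda>h. h *\<^sub>R u)) (at t)"
    by (auto intro!: derivative_eq_intros)
  from has_derivative_compose[OF this assms] show ?thesis .
qed

lemma has_field_derivative_along_line:
  fixes f :: "'a::real_inner \<Rightarrow> real"
  assumes "(f has_derivative (\<lambda>h. c \<bullet> h)) (at (a + t *\<^sub>R u))"
  shows "((\<lambda>s. f (a + s *\<^sub>R u)) has_field_derivative (c \<bullet> u)) (at t)"
  using has_derivative_imp_has_field_derivative[OF has_derivative_along_line[OF assms]]
  by (simp add: mult.commute)

lemma has_field_derivative_inner_along_line:
  fixes G :: "'a::real_normed_vector \<Rightarrow> 'b::real_inner"
  assumes "(G has_derivative G') (at (a + t *\<^sub>R u))"
  shows "((\<lambda>s. e \<bullet> G (a + s *\<^sub>R u)) has_field_derivative (e \<bullet> G' u)) (at t)"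
proof -
  have "((\<lambda>s. e \<bullet> G (a + s *\<^sub>R u)) has_derivative (\<lambda>h. e \<bullet> G' (h *\<^sub>R u))) (at t)"
    using has_derivative_along_line[OF assms] by (auto intro!: derivative_eq_intros)
  then show ?thesis
    by (rule has_derivative_imp_has_field_derivative)
      (simp add: linear_scale[OF has_derivative_linear[OF assms]])
qed

lemma convex_on_gradient_inequality:
  fixes f :: "'a::real_inner \<Rightarrow> real"
  assumes conv: "convex_on UNIV f"
    and grad: "(f has_derivative (\<lambda>h. g \<bullet> h)) (at x)"
  shows "f x + g \<bullet> (y - x) \<le> f y"
proof -
  have "((\<lambda>t. f (x + t *\<^sub>R (y - x))) has_field_derivative (g \<bullet> (y - x))) (at 0 within UNIV)"
    using has_field_derivative_along_line[of f g x 0] grad by simp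
  from convex_on_imp_above_tangent[OF convex_on_along_line[OF conv] _ _ _ this, of 1]
  show ?thesis by simp
qed

lemma convex_on_gradient_monotone:
  fixes f :: "'a::real_inner \<Rightarrow> real"
  assumes conv: "convex_on UNIV f"
    and grad: "\<And>x. (f has_derivative (\<lambda>h. g x \<bullet> h)) (at x)"
  shows "0 \<le> (g y - g x) \<bullet> (y - x)"
  using convex_on_gradient_inequality[OF conv grad[of x], of y] convex_on_gradient_inequality[OF conv grad[of y], of x]
  by (simp add: inner_diff_left inner_diff_right inner_commute)

lemma convex_on_gradient_derivative_nonneg:
  fixes f :: "'a::real_inner \<Rightarrow> real"
  assumes conv: "convex_on UNIV f"
    and grad: "\<And>x. (f has_derivative (\<lambda>h. g x \<bullet> h)) (at x)"
    and hess: "(g has_derivative H) (at z)"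
  shows "0 \<le> H v \<bullet> v"
proof -
  have "((\<lambda>t. v \<bullet> g (z + t *\<^sub>R v)) has_real_derivative (v \<bullet> H v)) (at 0)"
    by (rule has_field_derivative_inner_along_line) (simp add: hess)
  moreover have "mono_on UNIV (\<lambda>t. v \<bullet> g (z + t *\<^sub>R v))"
  proof (rule mono_onI)
    fix s t :: real assume "s \<le> t"
    have "0 \<le> (g (z + t *\<^sub>R v) - g (z + s *\<^sub>R v)) \<bullet> ((t - s) *\<^sub>R v)"
      using convex_on_gradient_monotone[OF conv grad, of "z + s *\<^sub>R v" "z + t *\<^sub>R v"]
      by (simp add: algebra_simps)
    then show "v \<bullet> g (z + s *\<^sub>R v) \<le> v \<bullet> g (z + t *\<^sub>R v)"
      using \<open>s \<le> t\<close> by (cases "s = t") (auto simp: inner_diff_right inner_commute zero_le_mult_iff)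
  qed
  ultimately show ?thesis
    using mono_on_imp_deriv_nonneg by (fastforce simp: inner_commute)
qed

lemma gradient_second_difference_bound:
  fixes f :: "'a::real_inner \<Rightarrow> real"
  assumes grad: "\<And>x. (f has_derivative (\<lambda>h. g x \<bullet> h)) (at x)"
    and lin: "linear H"
    and remainder: "\<And>a. norm a < \<delta> \<Longrightarrow> norm (g (z + a) - g z - H a) \<le> \<epsilon> * norm a"
    and "0 \<le> \<epsilon>" and s: "0 < s" "s * (norm v + norm w) < \<delta>"
  shows "\<bar>f (z + s *\<^sub>R v + s *\<^sub>R w) - f (z + s *\<^sub>R v) - f (z + s *\<^sub>R w) + f z - s\<^sup>2 * (H w \<bullet> v)\<bar>
          \<le> \<epsilon> * s\<^sup>2 * ((2 * norm v + norm w) * norm v)"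
proof -
  define \<psi> where "\<psi> t = f (z + s *\<^sub>R w + t *\<^sub>R v) - f (z + t *\<^sub>R v)" for t
  have "(\<psi> has_real_derivative (g (z + s *\<^sub>R w + t *\<^sub>R v) - g (z + t *\<^sub>R v)) \<bullet> v) (at t)" for t
    unfolding \<psi>_def inner_diff_left by (intro DERIV_diff has_field_derivative_along_line grad)
  then obtain \<xi> where \<xi>: "0 < \<xi>" "\<xi> < s"
    and mvt: "\<psi> s - \<psi> 0 = s * ((g (z + s *\<^sub>R w + \<xi> *\<^sub>R v) - g (z + \<xi> *\<^sub>R v)) \<bullet> v)"
    using MVT2[OF s(1)] by force
  define R where "R a = g (z + a) - g z - H a" for a
  define a\<^sub>1 where "a\<^sub>1 = s *\<^sub>R w + \<xi> *\<^sub>R v"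
  define a\<^sub>2 where "a\<^sub>2 = \<xi> *\<^sub>R v"
  have "norm a\<^sub>1 \<le> s * norm w + \<xi> * norm v"
    using norm_triangle_ineq[of "s *\<^sub>R w" "\<xi> *\<^sub>R v"] s \<xi> by (simp add: a\<^sub>1_def)
  moreover have "\<xi> * norm v \<le> s * norm v"
    using \<xi> by (simp add: mult_right_mono)
  ultimately have a\<^sub>1: "norm a\<^sub>1 \<le> s * norm w + s * norm v" and a\<^sub>2: "norm a\<^sub>2 \<le> s * norm v"
    using \<xi> by (auto simp: a\<^sub>2_def)
  have "0 \<le> s * norm w" using s by simp
  then have "norm a\<^sub>1 < \<delta>" "norm a\<^sub>2 < \<delta>"
    using a\<^sub>1 a\<^sub>2 s(2) by (simp_all add: distrib_left)
  then have "norm (R a\<^sub>1 - R a\<^sub>2) \<le> \<epsilon> * norm a\<^sub>1 + \<epsilon> * norm a\<^sub>2"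
    using remainder norm_triangle_ineq4[of "R a\<^sub>1" "R a\<^sub>2"] unfolding R_def
    by (meson add_mono order_trans)
  also have "\<dots> \<le> \<epsilon> * (s * (2 * norm v + norm w))"
    using mult_left_mono[OF add_mono[OF a\<^sub>1 a\<^sub>2] \<open>0 \<le> \<epsilon>\<close>] by (simp add: algebra_simps)
  finally have remainder_bound: "norm (R a\<^sub>1 - R a\<^sub>2) \<le> \<epsilon> * (s * (2 * norm v + norm w))" .
  have "g (z + s *\<^sub>R w + \<xi> *\<^sub>R v) - g (z + \<xi> *\<^sub>R v) = s *\<^sub>R H w + (R a\<^sub>1 - R a\<^sub>2)"
    by (simp add: R_def a\<^sub>1_def a\<^sub>2_def add.assoc linear_add[OF lin] linear_scale[OF lin])
  then have "\<psi> s - \<psi> 0 - s\<^sup>2 * (H w \<bullet> v) = s * ((R a\<^sub>1 - R a\<^sub>2) \<bullet> v)"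
    unfolding mvt by (simp add: inner_add_left power2_eq_square right_diff_distrib distrib_left)
  also have "\<bar>\<dots>\<bar> \<le> s * (norm (R a\<^sub>1 - R a\<^sub>2) * norm v)"
    using s Cauchy_Schwarz_ineq2 by (simp add: abs_mult mult_left_mono)
  also have "\<dots> \<le> \<epsilon> * s\<^sup>2 * ((2 * norm v + norm w) * norm v)"
    using mult_left_mono[OF mult_right_mono[OF remainder_bound norm_ge_zero[of v]], of s] s
    by (simp add: power2_eq_square mult_ac)
  finally have "\<bar>\<psi> s - \<psi> 0 - s\<^sup>2 * (H w \<bullet> v)\<bar> \<le> \<epsilon> * s\<^sup>2 * ((2 * norm v + norm w) * norm v)" .
  moreover have "z + s *\<^sub>R w + s *\<^sub>R v = z + s *\<^sub>R v + s *\<^sub>R w"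
    by (simp add: add_ac)
  ultimately show ?thesis
    by (simp add: \<psi>_def)
qed

lemma gradient_second_difference_tendsto:
  fixes f :: "'a::real_inner \<Rightarrow> real"
  assumes grad: "\<And>x. (f has_derivative (\<lambda>h. g x \<bullet> h)) (at x)"
    and hess: "(g has_derivative H) (at z)"
  shows "((\<lambda>s. (f (z + s *\<^sub>R v + s *\<^sub>R w) - f (z + s *\<^sub>R v) - f (z + s *\<^sub>R w) + f z) / s\<^sup>2)
           \<longlongrightarrow> H w \<bullet> v) (at_right 0)"
proof (rule tendstoI)
  fix e :: real assume "0 < e"
  define \<Delta> where "\<Delta> s = f (z + s *\<^sub>R v + s *\<^sub>R w) - f (z + s *\<^sub>R v) - f (z + s *\<^sub>R w) + f z" for s
  define C where "C = (2 * norm v + norm w) * norm v + 1"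
  have "0 < C" by (simp add: C_def add_nonneg_pos)
  with \<open>0 < e\<close> obtain \<delta> where "0 < \<delta>"
    and remainder: "\<And>y. norm (y - z) < \<delta> \<Longrightarrow> norm (g y - g z - H (y - z)) \<le> e / C * norm (y - z)"
    using hess[unfolded has_derivative_at_alt] by (meson divide_pos_pos)
  have "0 < \<delta> / (norm v + norm w + 1)"
    using \<open>0 < \<delta>\<close> by (simp add: add_nonneg_pos)
  then have "\<forall>\<^sub>F s in at_right 0. s \<in> {0<..<\<delta> / (norm v + norm w + 1)}"
    by (rule eventually_at_right_real)
  then show "\<forall>\<^sub>F s in at_right 0. dist (\<Delta> s / s\<^sup>2) (H w \<bullet> v) < e"
  proof eventually_elim
    fix s assume s: "s \<in> {0<..<\<delta> / (norm v + norm w + 1)}"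
    then have "s * (norm v + norm w + 1) < \<delta>"
      by (simp add: pos_less_divide_eq add_nonneg_pos)
    then have "s * (norm v + norm w) < \<delta>"
      using s by (simp add: distrib_left)
    from gradient_second_difference_bound[OF grad has_derivative_linear[OF hess] _ _ _ this, where \<epsilon> = "e / C"]
    have "\<bar>\<Delta> s - s\<^sup>2 * (H w \<bullet> v)\<bar> \<le> e / C * s\<^sup>2 * (C - 1)"
      using remainder[of "z + _"] s \<open>0 < e\<close> \<open>0 < C\<close> by (simp add: \<Delta>_def C_def)
    also have "\<dots> < e * s\<^sup>2"
      using s \<open>0 < e\<close> \<open>0 < C\<close> by (simp add: field_simps)
    finally have "\<bar>\<Delta> s - s\<^sup>2 * (H w \<bullet> v)\<bar> / s\<^sup>2 < e"
      using s by (simp add: pos_divide_less_eq)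
    moreover have "\<Delta> s / s\<^sup>2 - H w \<bullet> v = (\<Delta> s - s\<^sup>2 * (H w \<bullet> v)) / s\<^sup>2"
      using s by (simp add: field_simps)
    ultimately show "dist (\<Delta> s / s\<^sup>2) (H w \<bullet> v) < e"
      by (simp add: dist_real_def)
  qed
qed

lemma gradient_derivative_symmetric:
  fixes f :: "'a::real_inner \<Rightarrow> real"
  assumes grad: "\<And>x. (f has_derivative (\<lambda>h. g x \<bullet> h)) (at x)"
    and hess: "(g has_derivative H) (at z)"
  shows "H w \<bullet> v = H v \<bullet> w"
proof (rule tendsto_unique[OF trivial_limit_at_right_real])
  show "((\<lambda>s. (f (z + s *\<^sub>R v + s *\<^sub>R w) - f (z + s *\<^sub>R v) - f (z + s *\<^sub>R w) + f z) / s\<^sup>2)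
           \<longlongrightarrow> H w \<bullet> v) (at_right 0)"
    by (rule gradient_second_difference_tendsto[OF grad hess])
  show "((\<lambda>s. (f (z + s *\<^sub>R v + s *\<^sub>R w) - f (z + s *\<^sub>R v) - f (z + s *\<^sub>R w) + f z) / s\<^sup>2)
           \<longlongrightarrow> H v \<bullet> w) (at_right 0)"
    using gradient_second_difference_tendsto[OF grad hess, of w v] by (simp add: algebra_simps)
qed

lemma symmetric_psd_norm_sq_le:
  fixes H :: "'a::real_inner \<Rightarrow> 'a"
  assumes lin: "linear H"
    and sym: "\<And>v w. H w \<bullet> v = H v \<bullet> w"
    and psd: "\<And>v. 0 \<le> H v \<bullet> v"
    and bound: "\<And>v. H v \<bullet> v \<le> L * (norm v)\<^sup>2"
    and "0 < L"
  shows "(norm (H v))\<^sup>2 \<le> L * (H v \<bullet> v)"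
proof -
  define t where "t = 1 / L"
  have "0 \<le> H (v - t *\<^sub>R H v) \<bullet> (v - t *\<^sub>R H v)"
    by (rule psd)
  also have "\<dots> = H v \<bullet> v - 2 * t * (norm (H v))\<^sup>2 + t\<^sup>2 * (H (H v) \<bullet> H v)"
  proof -
    have "H (v - t *\<^sub>R H v) = H v - t *\<^sub>R H (H v)"
      by (simp add: linear_diff[OF lin] linear_scale[OF lin])
    moreover have "H (H v) \<bullet> v = (norm (H v))\<^sup>2" "H v \<bullet> H v = (norm (H v))\<^sup>2"
      using sym[of v "H v"] by (simp_all add: power2_norm_eq_inner)
    ultimately show ?thesis
      by (simp only: inner_diff_left inner_diff_right inner_scaleR_left inner_scaleR_right
          inner_commute[of v "H v"]) (simp add: power2_eq_square algebra_simps)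
  qed
  also have "\<dots> \<le> H v \<bullet> v - 2 * t * (norm (H v))\<^sup>2 + t\<^sup>2 * (L * (norm (H v))\<^sup>2)"
    using bound[of "H v"] by (simp add: mult_left_mono)
  also have "\<dots> = H v \<bullet> v - (norm (H v))\<^sup>2 / L"
    using \<open>0 < L\<close> by (simp add: t_def power2_eq_square field_simps)
  finally show ?thesis
    using \<open>0 < L\<close> by (simp add: field_simps)
qed

lemma norm_le_if_norm_sq_le_inner:
  fixes y v :: "'a::real_inner"
  assumes "(norm y)\<^sup>2 \<le> L * (y \<bullet> v)" and "0 \<le> L"
  shows "norm y \<le> L * norm v"
proof -
  have "L * (y \<bullet> v) \<le> L * (norm y * norm v)"
    using norm_cauchy_schwarz[of y v] \<open>0 \<le> L\<close> by (rule mult_left_mono)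
  then have "norm y * norm y \<le> (L * norm v) * norm y"
    using assms(1) by (simp add: power2_eq_square mult_ac)
  then show ?thesis
    using \<open>0 \<le> L\<close> by (cases "norm y = 0") (auto simp: mult_le_cancel_right)
qed

lemma mean_value_bound_along_line:
  fixes g :: "'a::real_normed_vector \<Rightarrow> 'b::real_inner"
  assumes cont: "continuous_on {0..1} (\<lambda>t. g (a + t *\<^sub>R u))"
    and deriv: "\<And>t. 0 < t \<Longrightarrow> t < 1 \<Longrightarrow> (g has_derivative H (a + t *\<^sub>R u)) (at (a + t *\<^sub>R u))"
  shows "\<exists>t\<in>{0<..<1}. norm (g (a + u) - g a) \<le> norm (H (a + t *\<^sub>R u) u)"
proof -
  have "((\<lambda>s. g (a + s *\<^sub>R u)) has_derivative (\<lambda>h. H (a + t *\<^sub>R u) (h *\<^sub>R u))) (at t)"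
    if "0 < t" "t < 1" for t
    by (rule has_derivative_along_line[OF deriv[OF that]])
  from mvt_general[OF zero_less_one cont this] show ?thesis
    by simp
qed

lemma nonneg_derivative_vanishes_if_ends_le:
  fixes \<psi> :: "real \<Rightarrow> real"
  assumes cont: "continuous_on {0..1} \<psi>"
    and deriv: "\<And>t. 0 < t \<Longrightarrow> t < 1 \<Longrightarrow> (\<psi> has_real_derivative \<psi>' t) (at t)"
    and nonneg: "\<And>t. 0 < t \<Longrightarrow> t < 1 \<Longrightarrow> 0 \<le> \<psi>' t"
    and "\<psi> 1 \<le> \<psi> 0" and t: "0 < t" "t < 1"
  shows "\<psi>' t = 0"
proof -
  have mono: "\<psi> r \<le> \<psi> s" if "0 \<le> r" "r \<le> s" "s \<le> 1" for r s
  proof (rule DERIV_nonneg_imp_increasing_open[OF \<open>r \<le> s\<close>])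
    show "\<exists>y. (\<psi> has_real_derivative y) (at x) \<and> 0 \<le> y" if "r < x" "x < s" for x
    proof -
      have "0 < x" "x < 1"
        using that \<open>0 \<le> r\<close> \<open>s \<le> 1\<close> by linarith+
      with deriv nonneg show ?thesis
        by blast
    qed
    show "continuous_on {r..s} \<psi>"
      using continuous_on_subset[OF cont] that by simp
  qed
  have const: "\<psi> s = \<psi> 0" if "0 \<le> s" "s \<le> 1" for s
    using mono[of 0 s] mono[of s 1] \<open>\<psi> 1 \<le> \<psi> 0\<close> that by linarith
  show ?thesis
  proof (rule DERIV_local_const[OF deriv[OF t]])
    show "0 < min t (1 - t)"
      using t by simp
    show "\<forall>y. \<bar>t - y\<bar> < min t (1 - t) \<longrightarrow> \<psi> t = \<psi> y"
    proof (intro allI impI)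
      fix y assume "\<bar>t - y\<bar> < min t (1 - t)"
      then have "0 \<le> y" "y \<le> 1"
        by (simp_all add: abs_less_iff)
      then show "\<psi> t = \<psi> y"
        using const[of t] const[of y] t by simp
    qed
  qed
qed

lemma constant_along_line_if_inner_nonpos:
  fixes g :: "'a::real_inner \<Rightarrow> 'a"
  assumes cont: "continuous_on {0..1} (\<lambda>t. g (a + t *\<^sub>R u))"
    and deriv: "\<And>t. 0 < t \<Longrightarrow> t < 1 \<Longrightarrow> (g has_derivative H (a + t *\<^sub>R u)) (at (a + t *\<^sub>R u))"
    and form: "\<And>t. 0 < t \<Longrightarrow> t < 1 \<Longrightarrow>
      (norm (H (a + t *\<^sub>R u) u))\<^sup>2 \<le> L * (H (a + t *\<^sub>R u) u \<bullet> u)"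
    and "0 < L"
    and nonpos: "(g (a + u) - g a) \<bullet> u \<le> 0"
  shows "g (a + u) = g a"
proof -
  have H_zero: "H (a + t *\<^sub>R u) u = 0" if t: "0 < t" "t < 1" for t
  proof -
    have "u \<bullet> H (a + t *\<^sub>R u) u = 0"
    proof (rule nonneg_derivative_vanishes_if_ends_le[where \<psi> = "\<lambda>t. u \<bullet> g (a + t *\<^sub>R u)"
          and \<psi>' = "\<lambda>t. u \<bullet> H (a + t *\<^sub>R u) u"])
      show "continuous_on {0..1} (\<lambda>t. u \<bullet> g (a + t *\<^sub>R u))"
        by (intro continuous_intros cont)
      show "((\<lambda>t. u \<bullet> g (a + t *\<^sub>R u)) has_real_derivative u \<bullet> H (a + s *\<^sub>R u) u) (at s)"
        if "0 < s" "s < 1" for s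
        by (rule has_field_derivative_inner_along_line[OF deriv[OF that]])
      show "0 \<le> u \<bullet> H (a + s *\<^sub>R u) u" if "0 < s" "s < 1" for s
        using order_trans[OF zero_le_power2 form[OF that]] \<open>0 < L\<close>
        by (simp add: zero_le_mult_iff inner_commute)
      show "u \<bullet> g (a + 1 *\<^sub>R u) \<le> u \<bullet> g (a + 0 *\<^sub>R u)"
        using nonpos by (simp add: inner_diff_left inner_diff_right inner_commute)
    qed (use t in auto)
    then show ?thesis
      using form[OF t] by (simp add: inner_commute)
  qed
  moreover obtain t where "t \<in> {0<..<1}" "norm (g (a + u) - g a) \<le> norm (H (a + t *\<^sub>R u) u)"
    using mean_value_bound_along_line[OF cont deriv] by blast
  ultimately show ?thesis
    by simp
qed

lemma norm_ge_if_inner_le_neg: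
  fixes g u :: "'a::real_inner"
  assumes "g \<bullet> u \<le> - lam * norm u" and "u \<noteq> 0"
  shows "lam \<le> norm g"
proof -
  have "- (norm g * norm u) \<le> g \<bullet> u"
    using Cauchy_Schwarz_ineq2[of g u] by linarith
  then have "lam * norm u \<le> norm g * norm u"
    using assms(1) by linarith
  then show ?thesis
    using \<open>u \<noteq> 0\<close> by simp
qed

lemma inner_neg_if_inner_le_neg_norm:
  fixes g u d :: "'a::real_inner"
  assumes "g \<bullet> u \<le> - (norm g * norm u)" and "0 < g \<bullet> d" and "u \<noteq> 0"
  shows "u \<bullet> d < 0"
proof -
  have "g \<bullet> (- u) = norm g * norm (- u)"
    using assms(1) norm_cauchy_schwarz[of g "- u"] by simp
  then have "norm g *\<^sub>R (- u) = norm (- u) *\<^sub>R g"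
    by (simp only: norm_cauchy_schwarz_eq)
  then have "(norm g *\<^sub>R (- u)) \<bullet> d = (norm (- u) *\<^sub>R g) \<bullet> d"
    by simp
  then have "norm g * (u \<bullet> d) = - (norm u * (g \<bullet> d))"
    by simp
  moreover have "0 < norm u * (g \<bullet> d)"
    using assms by simp
  ultimately show ?thesis
    by (smt (verit) mult_nonneg_nonneg norm_ge_zero)
qed

lemma inner_pos_if_norm_add_eq:
  fixes a b d :: "'a::real_inner"
  assumes "norm (a + b) = norm a + norm b" and "0 < b \<bullet> d"
  shows "0 < (a + b) \<bullet> d"
proof -
  have "norm a *\<^sub>R b = norm b *\<^sub>R a"
    using assms(1) by (simp only: norm_triangle_eq)
  then have "(norm a *\<^sub>R b) \<bullet> d = (norm b *\<^sub>R a) \<bullet> d"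
    by simp
  then have "norm b * (a \<bullet> d) = norm a * (b \<bullet> d)"
    by simp
  moreover have "0 < norm b"
    using assms(2) by auto
  ultimately have "0 \<le> a \<bullet> d"
    using assms(2) by (smt (verit) mult_nonneg_nonneg norm_ge_zero zero_le_mult_iff)
  with assms(2) show ?thesis
    by (simp add: inner_add_left)
qed

lemma exists_closer_point_along_direction:
  fixes a x u :: "'a::real_inner"
  assumes "u \<bullet> (x - a) < 0"
  shows "\<exists>s. 0 < s \<and> s < 1 \<and> dist a (x + s *\<^sub>R u) < dist a x"
proof -
  define s where "s = min (1 / 2) (- (u \<bullet> (x - a)) / (norm u)\<^sup>2)"
  have "u \<noteq> 0"
    using assms by auto
  then have "0 < - (u \<bullet> (x - a)) / (norm u)\<^sup>2"
    using assms by (intro divide_pos_pos) simp_all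
  then have "0 < s" "s < 1"
    by (simp_all add: s_def)
  have "s * (norm u)\<^sup>2 \<le> - (u \<bullet> (x - a))"
    using \<open>u \<noteq> 0\<close> by (simp add: s_def min_def field_simps)
  then have "s * (s * (norm u)\<^sup>2) \<le> s * (- (u \<bullet> (x - a)))"
    using \<open>0 < s\<close> by (rule mult_left_mono[OF _ less_imp_le])
  moreover have "(norm (x + s *\<^sub>R u - a))\<^sup>2 = (norm (x - a))\<^sup>2 + 2 * s * (u \<bullet> (x - a)) + s * (s * (norm u)\<^sup>2)"
    using dot_norm[of "x - a" "s *\<^sub>R u"] by (simp add: inner_commute power2_eq_square algebra_simps)
  ultimately have "(norm (x + s *\<^sub>R u - a))\<^sup>2 \<le> (norm (x - a))\<^sup>2 + s * (u \<bullet> (x - a))"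
    by simp
  also have "\<dots> < (norm (x - a))\<^sup>2"
    using \<open>0 < s\<close> assms by (simp add: mult_pos_neg)
  finally have "norm (x + s *\<^sub>R u - a) < norm (x - a)"
    by (rule power2_less_imp_less) simp
  with \<open>0 < s\<close> \<open>s < 1\<close> show ?thesis
    by (auto simp: dist_norm norm_minus_commute)
qed

lemma convex_on_le_add_scaled_norm:
  fixes f :: "'a::real_inner \<Rightarrow> real"
  assumes conv: "convex_on UNIV f"
    and grad: "\<And>x. (f has_derivative (\<lambda>h. g x \<bullet> h)) (at x)"
    and "norm (g x) \<le> lam"
  shows "f x \<le> f y + lam * norm (x - y)"
proof -
  have "- (norm (g x) * norm (y - x)) \<le> g x \<bullet> (y - x)"
    using Cauchy_Schwarz_ineq2[of "g x" "y - x"] by linarith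
  moreover have "norm (g x) * norm (y - x) \<le> lam * norm (y - x)"
    using \<open>norm (g x) \<le> lam\<close> by (simp add: mult_right_mono)
  ultimately show ?thesis
    using convex_on_gradient_inequality[OF conv grad[of x], of y] by (simp add: norm_minus_commute)
qed

lemma gradient_inner_along_segment_to_minimizer:
  fixes f :: "'a::real_inner \<Rightarrow> real"
  assumes conv: "convex_on UNIV f"
    and grad: "\<And>x. (f has_derivative (\<lambda>h. g x \<bullet> h)) (at x)"
    and x_min: "\<And>z. f x \<le> f z + lam * norm (x - z)"
    and y_min: "f y + lam * norm (x - y) \<le> f x"
    and s: "0 \<le> s" "s < 1"
  shows "g (x + s *\<^sub>R (y - x)) \<bullet> (y - x) \<le> - lam * norm (y - x)"
proof -
  define u where "u = y - x"
  define p where "p = x + s *\<^sub>R u"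
  have "norm (x - p) = s * norm u"
    using s by (simp add: p_def)
  then have "f x - lam * s * norm u \<le> f p"
    using x_min[of p] by simp
  moreover have "f p + (1 - s) * (g p \<bullet> u) \<le> f y"
  proof -
    have "y - p = (1 - s) *\<^sub>R u"
      by (simp add: p_def u_def algebra_simps)
    then show ?thesis
      using convex_on_gradient_inequality[OF conv grad[of p], of y] by simp
  qed
  moreover have "f y \<le> f x - lam * norm u"
    using y_min by (simp add: u_def norm_minus_commute)
  moreover have "(1 - s) * (- lam * norm u) = lam * s * norm u - lam * norm u"
    by (simp add: algebra_simps)
  ultimately have "(1 - s) * (g p \<bullet> u) \<le> (1 - s) * (- lam * norm u)"
    by linarith
  then have "g p \<bullet> u \<le> - lam * norm u"
    by (rule mult_left_le_imp_le) (use s in simp)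
  then show ?thesis
    by (simp add: p_def u_def)
qed

locale convex_smooth_on_ball =
  fixes f :: "'a::real_inner \<Rightarrow> real"
    and g :: "'a \<Rightarrow> 'a"
    and H :: "'a \<Rightarrow> 'a \<Rightarrow> 'a"
    and x0 :: 'a and M :: ereal and L :: real
  assumes convex: "convex_on UNIV f"
    and gradient: "\<And>x. (f has_derivative (\<lambda>h. g x \<bullet> h)) (at x)"
    and M_pos: "0 < M"
    and L_pos: "0 < L"
    and hessian: "\<And>x. ereal (dist x0 x) \<le> M \<Longrightarrow>
                 (g has_derivative H x) (at x within {y. ereal (dist x0 y) \<le> M})"
    and hessian_bound: "\<And>x v. ereal (dist x0 x) \<le> M \<Longrightarrow> H x v \<bullet> v \<le> L * (norm v)\<^sup>2"
begin

lemma hessian_at_interior: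
  assumes "ereal (dist x0 z) < M"
  shows "(g has_derivative H z) (at z)"
proof -
  have "open {y. ereal (dist x0 y) < M}"
    by (intro open_Collect_less continuous_on_ereal continuous_intros)
  then have "at z within {y. ereal (dist x0 y) < M} = at z"
    using assms by (intro at_within_open) auto
  moreover have "(g has_derivative H z) (at z within {y. ereal (dist x0 y) \<le> M})"
    using hessian assms by simp
  then have "(g has_derivative H z) (at z within {y. ereal (dist x0 y) < M})"
    by (rule has_derivative_subset) auto
  ultimately show ?thesis
    by simp
qed

lemma hessian_norm_sq_le:
  assumes "ereal (dist x0 z) < M"
  shows "(norm (H z v))\<^sup>2 \<le> L * (H z v \<bullet> v)"
  using hessian_at_interior[OF assms] hessian_bound[of z] assms L_pos
  by (intro symmetric_psd_norm_sq_le has_derivative_linear gradient_derivative_symmetric[OF gradient]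
      convex_on_gradient_derivative_nonneg[OF convex gradient]) auto

lemma radius_in_interior:
  assumes "ereal (dist x0 z) \<le> M" and "0 \<le> t" "t < 1"
  shows "ereal (dist x0 (x0 + t *\<^sub>R (z - x0))) < M"
proof (cases "z = x0")
  case True
  then show ?thesis
    using M_pos by (simp add: zero_ereal_def)
next
  case False
  then have "ereal (t * dist x0 z) < ereal (dist x0 z)"
    using assms(3) by simp
  then have "ereal (t * dist x0 z) < M"
    using assms(1) by (rule less_le_trans)
  then show ?thesis
    using assms(2) by (simp add: dist_norm norm_minus_commute)
qed

lemma gradient_continuous_along_radius:
  assumes "ereal (dist x0 z) \<le> M"
  shows "continuous_on {0..1} (\<lambda>t. g (x0 + t *\<^sub>R (z - x0)))"
proof (rule continuous_on_compose2[of "{y. ereal (dist x0 y) \<le> M}" g])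
  show "continuous_on {y. ereal (dist x0 y) \<le> M} g"
    using hessian by (rule has_derivative_continuous_on) simp
  have "ereal (dist x0 (x0 + t *\<^sub>R (z - x0))) \<le> M" if "0 \<le> t" "t \<le> 1" for t
  proof -
    have "ereal (t * dist x0 z) \<le> ereal (dist x0 z)"
      using that by (simp add: mult_left_le_one_le)
    then have "ereal (t * dist x0 z) \<le> M"
      using assms by (rule order_trans)
    then show ?thesis
      using that by (simp add: dist_norm norm_minus_commute)
  qed
  then show "(\<lambda>t. x0 + t *\<^sub>R (z - x0)) ` {0..1} \<subseteq> {y. ereal (dist x0 y) \<le> M}"
    by auto
qed (intro continuous_intros)

lemma gradient_lipschitz_from_center:
  assumes "ereal (dist x0 z) \<le> M"
  shows "norm (g z - g x0) \<le> L * dist x0 z"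
proof -
  obtain t where "0 < t" "t < 1"
    and "norm (g (x0 + (z - x0)) - g x0) \<le> norm (H (x0 + t *\<^sub>R (z - x0)) (z - x0))"
    using mean_value_bound_along_line[OF gradient_continuous_along_radius[OF assms]
        hessian_at_interior[OF radius_in_interior[OF assms]]] by auto
  moreover have "norm (H (x0 + t *\<^sub>R (z - x0)) (z - x0)) \<le> L * norm (z - x0)"
    using \<open>0 < t\<close> \<open>t < 1\<close> L_pos
    by (intro norm_le_if_norm_sq_le_inner hessian_norm_sq_le radius_in_interior[OF assms]) auto
  ultimately show ?thesis
    by (simp add: dist_norm norm_minus_commute)
qed

lemma norm_gradient_le:
  assumes "ereal (dist x0 z) \<le> M"
  shows "norm (g z) \<le> norm (g x0) + L * dist x0 z"
  using norm_triangle_ineq2[of "g z" "g x0"] gradient_lipschitz_from_center[OF assms] by simp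

lemma gradient_inner_pos_if_lipschitz_tight:
  assumes "ereal (dist x0 z) \<le> M" and "z \<noteq> x0"
    and tight: "norm (g z - g x0) = L * dist x0 z"
  shows "0 < (g z - g x0) \<bullet> (z - x0)"
proof (rule ccontr)
  assume not_pos: "\<not> ?thesis"
  have interior: "ereal (dist x0 (x0 + t *\<^sub>R (z - x0))) < M" if "0 < t" "t < 1" for t
    using radius_in_interior[OF assms(1)] that by simp
  have "g (x0 + (z - x0)) = g x0"
  proof (rule constant_along_line_if_inner_nonpos[where H = H and L = L])
    show "continuous_on {0..1} (\<lambda>t. g (x0 + t *\<^sub>R (z - x0)))"
      by (rule gradient_continuous_along_radius[OF assms(1)])
    show "(g has_derivative H (x0 + t *\<^sub>R (z - x0))) (at (x0 + t *\<^sub>R (z - x0)))"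
      if "0 < t" "t < 1" for t
      by (rule hessian_at_interior[OF interior[OF that]])
    show "(norm (H (x0 + t *\<^sub>R (z - x0)) (z - x0)))\<^sup>2
        \<le> L * (H (x0 + t *\<^sub>R (z - x0)) (z - x0) \<bullet> (z - x0))" if "0 < t" "t < 1" for t
      by (rule hessian_norm_sq_le[OF interior[OF that]])
    show "(g (x0 + (z - x0)) - g x0) \<bullet> (z - x0) \<le> 0"
      using not_pos by simp
  qed (rule L_pos)
  then have "g z = g x0"
    by simp
  with tight assms(2) L_pos show False
    by simp
qed

lemma gradient_outward_if_norm_ge:
  assumes "norm (g x0) < lam"
    and x: "ereal (dist x0 x) \<le> M" "L * dist x0 x \<le> lam - norm (g x0)"
    and "lam \<le> norm (g x)"
  shows "0 < g x \<bullet> (x - x0)"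
proof -
  have "norm (g x0 + (g x - g x0)) \<le> norm (g x0) + norm (g x - g x0)"
    by (rule norm_triangle_ineq)
  then have tight: "norm (g x - g x0) = L * dist x0 x"
    and add_eq: "norm (g x0 + (g x - g x0)) = norm (g x0) + norm (g x - g x0)"
    using gradient_lipschitz_from_center[OF x(1)] x(2) assms(4) by auto
  have "x \<noteq> x0"
    using assms(1,4) by auto
  with x(1) tight have "0 < (g x - g x0) \<bullet> (x - x0)"
    by (intro gradient_inner_pos_if_lipschitz_tight)
  from inner_pos_if_norm_add_eq[OF add_eq this] show ?thesis
    by simp
qed

lemma penalized_minimizer:
  assumes "ereal (dist x0 x) \<le> M" and "L * dist x0 x \<le> lam - norm (g x0)"
  shows "f x \<le> f y + lam * norm (x - y)"
  using norm_gradient_le[OF assms(1)] assms(2)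
  by (intro convex_on_le_add_scaled_norm[OF convex gradient]) simp

lemma penalized_minimizer_unique:
  assumes "norm (g x0) < lam"
    and x: "ereal (dist x0 x) \<le> M" "L * dist x0 x \<le> lam - norm (g x0)"
    and y_min: "\<And>z. f y + lam * norm (x - y) \<le> f z + lam * norm (x - z)"
  shows "y = x"
proof (rule ccontr)
  assume "y \<noteq> x"
  define u where "u = y - x"
  have "u \<noteq> 0"
    using \<open>y \<noteq> x\<close> by (simp add: u_def)
  have "f y + lam * norm (x - y) \<le> f x"
    using y_min[of x] by simp
  then have along: "g (x + s *\<^sub>R u) \<bullet> u \<le> - lam * norm u" if "0 \<le> s" "s < 1" for s
    using gradient_inner_along_segment_to_minimizer[OF convex gradient penalized_minimizer[OF x] _ that]
    by (simp add: u_def)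
  have gx: "g x \<bullet> u \<le> - lam * norm u"
    using along[of 0] by simp
  then have "lam \<le> norm (g x)"
    using norm_ge_if_inner_le_neg \<open>u \<noteq> 0\<close> by blast
  moreover have "norm (g x) \<le> lam"
    using norm_gradient_le[OF x(1)] x(2) by simp
  ultimately have "norm (g x) = lam" "0 < g x \<bullet> (x - x0)"
    using gradient_outward_if_norm_ge[OF assms(1) x] by auto
  with gx \<open>u \<noteq> 0\<close> have "u \<bullet> (x - x0) < 0"
    by (intro inner_neg_if_inner_le_neg_norm[of "g x"]) auto
  then obtain s where s: "0 < s" "s < 1" and closer: "dist x0 (x + s *\<^sub>R u) < dist x0 x"
    using exists_closer_point_along_direction by blast
  have "ereal (dist x0 (x + s *\<^sub>R u)) \<le> M"
    using closer x(1) by (meson ereal_less_eq(3) less_imp_le order_trans)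
  then have "norm (g (x + s *\<^sub>R u)) \<le> norm (g x0) + L * dist x0 (x + s *\<^sub>R u)"
    by (rule norm_gradient_le)
  moreover have "L * dist x0 (x + s *\<^sub>R u) < L * dist x0 x"
    using closer L_pos by simp
  ultimately have "norm (g (x + s *\<^sub>R u)) < lam"
    using x(2) by linarith
  moreover have "lam \<le> norm (g (x + s *\<^sub>R u))"
    using along[of s] s \<open>u \<noteq> 0\<close> by (intro norm_ge_if_inner_le_neg) auto
  ultimately show False
    by simp
qed

end

theorem lemmaE3:
  fixes f :: "'a::euclidean_space \<Rightarrow> real"
    and g :: "'a \<Rightarrow> 'a"
    and H :: "'a \<Rightarrow> 'a \<Rightarrow> 'a"
    and x0 :: 'a and M :: ereal and L lam :: real
  assumes conv: "convex_on UNIV f"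
    and grad: "\<And>x. (f has_derivative (\<lambda>h. g x \<bullet> h)) (at x)"
    and M_pos: "M > 0"
    and L_pos: "L > 0"
    and hess: "\<And>x. ereal (dist x0 x) \<le> M \<Longrightarrow>
                 (g has_derivative H x) (at x within {y. ereal (dist x0 y) \<le> M})"
    and hess_bound: "\<And>x v. ereal (dist x0 x) \<le> M \<Longrightarrow> H x v \<bullet> v \<le> L * (norm v)\<^sup>2"
    and lam: "lam > norm (g x0)"
    and x: "ereal (dist x0 x) \<le> min (ereal ((lam - norm (g x0)) / L)) M"
  shows "f x = (INF y. f y + lam * norm (x - y))
         \<and> {y. \<forall>z. f y + lam * norm (x - y) \<le> f z + lam * norm (x - z)} = {x}"
proof -
  interpret convex_smooth_on_ball f g H x0 M L
    using conv grad M_pos L_pos hess hess_bound by unfold_locales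
  have x_ball: "ereal (dist x0 x) \<le> M" and x_radius: "L * dist x0 x \<le> lam - norm (g x0)"
    using x L_pos by (auto simp: pos_le_divide_eq mult.commute)
  note x_min = penalized_minimizer[OF x_ball x_radius]
  have "(INF y. f y + lam * norm (x - y)) = f x + lam * norm (x - x)"
  proof (rule cInf_eq_minimum)
    show "f x + lam * norm (x - x) \<in> range (\<lambda>y. f y + lam * norm (x - y))"
      by (rule rangeI)
  qed (auto intro: x_min)
  moreover have "{y. \<forall>z. f y + lam * norm (x - y) \<le> f z + lam * norm (x - z)} = {x}"
    using penalized_minimizer_unique[OF lam x_ball x_radius] x_min by auto
  ultimately show ?thesis
    by simp
qed

end
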